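(* Let $\mathbb G=V_1\times V_2$ be a step-two Carnot group and $f\in\mathcal A_h(\mathbb G)$. For $z\in V_2$ define $f_z:V_1\to\mathbb R$ by $f_z(x):=f(x,z)$. Then $f_z$ is affine (in the usual sense) on $V_1$ for every $z\in V_2$.
   Context: A step-two Carnot group is $\mathbb G=V_1\times V_2$, where $V_1,V_2$ are finite-dimensional real vector spaces with $V_2\neq\{0\}$, equipped with a bilinear skew-symmetric map $[\cdot,\cdot]:V_1\times V_1\to V_2$ with $\operatorname{span}\{[x,x']:x,x'\in V_1\}=V_2$, and group law $(x,z)\cdot(x',z')=(x+x',z+z'+[x,x'])$. $\mathcal A_h(\mathbb G)$ is the space of $h$-affine maps $f:\mathbb G\to\mathbb R$, i.e. such that for all $(x,z)\in\mathbb G$, $y\in V_1$, $t\mapsto f((x,z)\cdot(ty,0))$ is affine. *)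

theory Defs
  imports "HOL-Analysis.Analysis"
begin

text \<open>Step-two Carnot group data: V1 = 'a, V2 = 'b (finite-dimensional real vector
spaces, modelled as euclidean_space types; V2 nonzero since euclidean spaces have
nonempty basis), with a bilinear skew-symmetric bracket whose image spans V2.\<close>

definition step2_carnot :: "('a::euclidean_space \<Rightarrow> 'a \<Rightarrow> 'b::euclidean_space) \<Rightarrow> bool" where
  "step2_carnot br \<longleftrightarrow> bilinear br \<and> (\<forall>x y. br x y = - br y x)
     \<and> span {br x y | x y. True} = UNIV"

definition carnot_mult :: "('a \<Rightarrow> 'a \<Rightarrow> 'b) \<Rightarrow> ('a::real_vector \<times> 'b::real_vector) \<Rightarrow> 'a \<times> 'b \<Rightarrow> 'a \<times> 'b" where
  "carnot_mult br p q = (fst p + fst q, snd p + snd q + br (fst p) (fst q))"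

definition affine_fun :: "('a::real_vector \<Rightarrow> 'c::real_vector) \<Rightarrow> bool" where
  "affine_fun g \<longleftrightarrow> (\<exists>l c. linear l \<and> (\<forall>x. g x = l x + c))"

definition h_affine :: "('a::real_vector \<Rightarrow> 'a \<Rightarrow> 'b::real_vector) \<Rightarrow> ('a \<times> 'b \<Rightarrow> real) \<Rightarrow> bool" where
  "h_affine br f \<longleftrightarrow> (\<forall>p y. affine_fun (\<lambda>t::real. f (carnot_mult br p (t *\<^sub>R y, 0))))"

end

theory Submission
  imports Defs
begin

text \<open>Fix the vertical coordinate \<open>z\<close> and a line \<open>u \<mapsto> x + u d\<close> in \<open>V\<^sub>1\<close>.
Through the point \<open>(x + u d, z)\<close> runs the horizontal line in direction \<open>y\<^sub>u = -x/3 + u d\<close>,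
and by bilinearity and skew-symmetry of the bracket its points at parameters \<open>1\<close> and \<open>-3\<close>
are \<open>(2x/3, z)\<cdot>(2u d, 0)\<close> and \<open>(2x, z)\<cdot>(-2u d, 0)\<close>. Both of these trace horizontal lines
as \<open>u\<close> varies, so \<open>f\<close> is affine in \<open>u\<close> there. Since \<open>0 = 3/4 \<cdot> 1 + 1/4 \<cdot> (-3)\<close>,
affinity along the line through \<open>(x + u d, z)\<close> expresses \<open>f (x + u d, z)\<close> as the corresponding
combination of these two values, hence as an affine function of \<open>u\<close>. A map that is affine
on every line is affine.\<close>

lemma affine_fun_affine_comb:
  assumes "affine_fun g"
  shows "g ((1 - u) *\<^sub>R a + u *\<^sub>R b) = (1 - u) *\<^sub>R g a + u *\<^sub>R g b"
proof -
  obtain l c where l: "linear l" and g: "\<And>x. g x = l x + c"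
    using assms unfolding affine_fun_def by blast
  have "l ((1 - u) *\<^sub>R a + u *\<^sub>R b) = (1 - u) *\<^sub>R l a + u *\<^sub>R l b"
    by (simp add: linear_add[OF l] linear_scale[OF l])
  then show ?thesis
    by (simp add: g algebra_simps)
qed

lemma affine_fun_lincomb:
  assumes "affine_fun g" and "affine_fun h"
  shows "affine_fun (\<lambda>x. a *\<^sub>R g x + b *\<^sub>R h x)"
proof -
  obtain l c where l: "linear l" and g: "\<And>x. g x = l x + c"
    using assms(1) unfolding affine_fun_def by blast
  obtain m e where m: "linear m" and h: "\<And>x. h x = m x + e"
    using assms(2) unfolding affine_fun_def by blast
  have "linear (\<lambda>x. a *\<^sub>R l x + b *\<^sub>R m x)"
    using l m by (intro linear_compose_add linear_compose_scale_right)
  then show ?thesis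
    unfolding affine_fun_def
    by (intro exI[of _ "\<lambda>x. a *\<^sub>R l x + b *\<^sub>R m x"] exI[of _ "a *\<^sub>R c + b *\<^sub>R e"])
       (simp add: g h algebra_simps)
qed

lemma affine_fun_if_affine_on_lines:
  fixes g :: "'a::real_vector \<Rightarrow> 'c::real_vector"
  assumes lines: "\<And>x d. affine_fun (\<lambda>u. g (x + u *\<^sub>R d))"
  shows "affine_fun g"
proof -
  have segment: "g ((1 - u) *\<^sub>R a + u *\<^sub>R b) = (1 - u) *\<^sub>R g a + u *\<^sub>R g b" for a b u
    using affine_fun_affine_comb[OF lines[of a "b - a"], of u 0 1]
    by (simp add: algebra_simps)
  define l where "l x = g x - g 0" for x
  have l_segment: "l ((1 - u) *\<^sub>R a + u *\<^sub>R b) = (1 - u) *\<^sub>R l a + u *\<^sub>R l b" for a b u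
    using segment[of u a b] scaleR_collapse[of u "g 0"] unfolding l_def
    by (metis (no_types, lifting) add_diff_add scaleR_diff_right)
  have l_scale: "l (u *\<^sub>R x) = u *\<^sub>R l x" for u x
    using l_segment[of u 0 x] by (simp add: l_def)
  have l_add: "l (a + b) = l a + l b" for a b
    using l_segment[of "1/2" "2 *\<^sub>R a" "2 *\<^sub>R b"] by (simp add: l_scale)
  have "linear l"
    by (rule linearI) (use l_add l_scale in auto)
  then show ?thesis
    unfolding affine_fun_def by (intro exI[of _ l] exI[of _ "g 0"]) (simp add: l_def)
qed

lemma carnot_mult_horizontal_lines_meet:
  fixes br :: "'a::real_vector \<Rightarrow> 'a \<Rightarrow> 'b::real_vector"
    and x d :: 'a and u :: real
  assumes bl: "bilinear br" and alt: "\<And>v. br v v = 0"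
  defines "y \<equiv> (- 1/3) *\<^sub>R x + u *\<^sub>R d"
  shows "carnot_mult br (x + u *\<^sub>R d, z) (1 *\<^sub>R y, 0)
           = carnot_mult br ((2/3) *\<^sub>R x, z) (u *\<^sub>R (2 *\<^sub>R d), 0)"
    and "carnot_mult br (x + u *\<^sub>R d, z) ((-3) *\<^sub>R y, 0)
           = carnot_mult br (2 *\<^sub>R x, z) (u *\<^sub>R (- 2 *\<^sub>R d), 0)"
proof -
  have skew: "br d x = - br x d"
    using alt[of "x + d"] alt[of x] alt[of d]
    by (simp add: bilinear_ladd[OF bl] bilinear_radd[OF bl] eq_neg_iff_add_eq_0)
  note br_simps = bilinear_ladd[OF bl] bilinear_radd[OF bl] bilinear_lmul[OF bl]
    bilinear_rmul[OF bl] bilinear_lneg[OF bl] bilinear_rneg[OF bl]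
    bilinear_lsub[OF bl] bilinear_rsub[OF bl] alt skew
  show "carnot_mult br (x + u *\<^sub>R d, z) (1 *\<^sub>R y, 0)
           = carnot_mult br ((2/3) *\<^sub>R x, z) (u *\<^sub>R (2 *\<^sub>R d), 0)"
    and "carnot_mult br (x + u *\<^sub>R d, z) ((-3) *\<^sub>R y, 0)
           = carnot_mult br (2 *\<^sub>R x, z) (u *\<^sub>R (- 2 *\<^sub>R d), 0)"
    by (simp_all add: carnot_mult_def y_def br_simps scaleR_2 algebra_simps
        flip: scaleR_add_left)
qed

lemma h_affine_imp_affine_slices:
  fixes br :: "'a::real_vector \<Rightarrow> 'a \<Rightarrow> 'b::real_vector"
  assumes bl: "bilinear br" and alt: "\<And>v. br v v = 0" and "h_affine br f"
  shows "affine_fun (\<lambda>x. f (x, z))"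
proof (rule affine_fun_if_affine_on_lines)
  fix x d :: 'a
  have horizontal: "affine_fun (\<lambda>t. f (carnot_mult br p (t *\<^sub>R v, 0)))" for p v
    using \<open>h_affine br f\<close> unfolding h_affine_def by blast
  have slice: "f (x + u *\<^sub>R d, z)
      = (3/4) *\<^sub>R f (carnot_mult br ((2/3) *\<^sub>R x, z) (u *\<^sub>R (2 *\<^sub>R d), 0))
      + (1/4) *\<^sub>R f (carnot_mult br (2 *\<^sub>R x, z) (u *\<^sub>R (- 2 *\<^sub>R d), 0))" for u
  proof -
    let ?p = "(x + u *\<^sub>R d, z)" and ?y = "(- 1/3) *\<^sub>R x + u *\<^sub>R d"
    have "carnot_mult br ?p (0 *\<^sub>R ?y, 0) = ?p"
      by (simp add: carnot_mult_def bilinear_rzero[OF bl])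
    moreover have "f (carnot_mult br ?p (((1 - 1/4) *\<^sub>R 1 + (1/4) *\<^sub>R (-3)) *\<^sub>R ?y, 0))
        = (1 - 1/4) *\<^sub>R f (carnot_mult br ?p (1 *\<^sub>R ?y, 0))
          + (1/4) *\<^sub>R f (carnot_mult br ?p ((-3) *\<^sub>R ?y, 0))"
      by (rule affine_fun_affine_comb[OF horizontal])
    ultimately show ?thesis
      unfolding carnot_mult_horizontal_lines_meet[OF bl alt] by simp
  qed
  show "affine_fun (\<lambda>u. f (x + u *\<^sub>R d, z))"
    unfolding slice by (intro affine_fun_lincomb horizontal)
qed

theorem corollary3p8:
  fixes br :: "'a::euclidean_space \<Rightarrow> 'a \<Rightarrow> 'b::euclidean_space"
    and f :: "'a \<times> 'b \<Rightarrow> real"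
  assumes "step2_carnot br"
    and "h_affine br f"
  shows "\<forall>z. affine_fun (\<lambda>x. f (x, z))"
proof
  fix z
  have bl: "bilinear br" and skew: "\<And>x y. br x y = - br y x"
    using assms(1) unfolding step2_carnot_def by blast+
  have alt: "br v v = 0" for v
    using skew[of v v] by (simp add: eq_neg_iff_add_eq_0 flip: scaleR_2)
  from bl alt assms(2) show "affine_fun (\<lambda>x. f (x, z))"
    by (rule h_affine_imp_affine_slices)
qed

end
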